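(* Let $\Psi$ be a saturated root subsystem of $\Phi$, let $\Gamma$ be a gallery in $\Phi$, and let $\Delta$ be a gallery in $\Phi$ lifting $\Gamma_\Psi$. Let $p:[1,|\Gamma_\Psi|]\to[1,|\Gamma|]$ be the increasing embedding with image $I_\Psi(\Gamma)$. Then $(\Delta,\Gamma)$ is a $p$-pair whose sign and cosign are both positive.
   Context: $E$ is a finite-dimensional real Euclidean space with inner product $(\cdot,\cdot)$; $\Phi\subset E$ is a finite (reduced) root system (not necessarily spanning, not necessarily crystallographic) with reflections $\omega_\alpha$ through $L_\alpha=\alpha^\perp$. A root subsystem is a nonempty $\Psi\subset\Phi$ stable under $\omega_\alpha$, $\alpha\in\Psi$; it is saturated if $\Psi=\mathbb R\Psi\cap\Phi$. For $X\subset\Phi$, $\mathrm{Ch}_X$ is the set of connected components of $E\setminus\bigcup_{\alpha\in X}L_\alpha$; for $C\in\mathrm{Ch}_\Phi$, $C_\Psi$ is the chamber of $\mathrm{Ch}_\Psi$ containing $C$. Chambers $C,D\in\mathrm{Ch}_X$ are connected through $L_\alpha$ if $\overline C\cap\overline D\cap L_\alpha$ has nonempty interior in $L_\alpha$. A gallery in $X$ is a sequence $(C_0,L_{\alpha_1},C_1,\dots,L_{\alpha_n},C_n)$ with $C_j\in\mathrm{Ch}_X$, $\alpha_j\in X$, $C_{j-1},C_j$ connected through $L_{\alpha_j}$; its length is $n$, $C_j$ is its $j$th chamber and $(L_{\alpha_1},\dots,L_{\alpha_n})$ its sequence of walls. For a gallery $\Gamma=(C_0,L_{\alpha_1},\dots,L_{\alpha_n},C_n)$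 in $\Phi$, $I_\Psi(\Gamma)=\{i:\alpha_i\in\Psi\}=\{i_1<\dots<i_m\}$ and $\Gamma_\Psi=((C_0)_\Psi,L_{\alpha_{i_1}},(C_{i_1})_\Psi,\dots,L_{\alpha_{i_m}},(C_{i_m})_\Psi)$. For $C\in\mathrm{Ch}_\Phi$, $\Phi^s(C)$ is the unique simple system of $\Phi$ contained in $\Phi^+(C)=\{\alpha\in\Phi:(e,\alpha)>0\ \forall e\in C\}$; similarly $\Psi^s(D)$ for $D\in\mathrm{Ch}_\Psi$. $C\in\mathrm{Ch}_\Phi$ lifts $D\in\mathrm{Ch}_\Psi$ if $\Psi^s(D)\subset\Phi^s(C)$; a gallery in $\Phi$ lifts a gallery in $\Psi$ if they have the same sequence of walls and each $j$th chamber of the first lifts the $j$th chamber of the second. Given galleries $\Gamma=(C_0,L_{\alpha_1},\dots,L_{\alpha_n},C_n)$ and $\Delta=(D_0,L_{\beta_1},\dots,L_{\beta_m},D_m)$ in $\Phi$ and an increasing embedding $p:[1,m]\to[1,n]$, $(\Delta,\Gamma)$ is a $p$-pair if $L_{\alpha_{p(i)}}=L_{\beta_i}$ for all $i$. Its sign $(\epsilon_i)$ has $\epsilon_i=1$ if $L_{\beta_i}$ does not separate $D_i$ and $C_{p(i)}$ (i.e. they lie in the same open half-space of $L_{\beta_i}$) and $\epsilon_i=-1$ otherwise; its cosign $(\mu_i)$ has $\mu_i=1$ if $L_{\beta_i}$ does not separate $D_{i-1}$ and $C_{p(i)-1}$ and $\mu_i=-1$ otherwise. A sign or cosign is positive if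 all entries equal $1$. *)

theory Defs
  imports "HOL-Analysis.Analysis"
begin

definition hyp :: "'a::euclidean_space \<Rightarrow> 'a set" where
  "hyp \<alpha> = {x. inner x \<alpha> = 0}"

definition refl :: "'a::euclidean_space \<Rightarrow> 'a \<Rightarrow> 'a" where
  "refl \<alpha> x = x - (2 * inner x \<alpha> / inner \<alpha> \<alpha>) *\<^sub>R \<alpha>"

text \<open>Finite reduced root system (not necessarily spanning or crystallographic).\<close>
definition root_system :: "'a::euclidean_space set \<Rightarrow> bool" where
  "root_system \<Phi> \<longleftrightarrow> finite \<Phi> \<and> 0 \<notin> \<Phi> \<and>
     (\<forall>\<alpha>\<in>\<Phi>. \<forall>\<beta>\<in>\<Phi>. refl \<alpha> \<beta> \<in> \<Phi>) \<and>
     (\<forall>\<alpha>\<in>\<Phi>. \<forall>c::real. c *\<^sub>R \<alpha> \<in> \<Phi> \<longrightarrow> c = 1 \<or> c = -1)"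

definition root_subsystem :: "'a::euclidean_space set \<Rightarrow> 'a set \<Rightarrow> bool" where
  "root_subsystem \<Phi> \<Psi> \<longleftrightarrow> \<Psi> \<noteq> {} \<and> \<Psi> \<subseteq> \<Phi> \<and> (\<forall>\<alpha>\<in>\<Psi>. \<forall>\<beta>\<in>\<Psi>. refl \<alpha> \<beta> \<in> \<Psi>)"

definition saturated :: "'a::euclidean_space set \<Rightarrow> 'a set \<Rightarrow> bool" where
  "saturated \<Phi> \<Psi> \<longleftrightarrow> \<Psi> = span \<Psi> \<inter> \<Phi>"

definition chambers :: "'a::euclidean_space set \<Rightarrow> 'a set set" where
  "chambers X = components (UNIV - (\<Union>\<alpha>\<in>X. hyp \<alpha>))"

definition subch :: "'a::euclidean_space set \<Rightarrow> 'a set \<Rightarrow> 'a set" where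
  "subch \<Psi> C = (THE D. D \<in> chambers \<Psi> \<and> C \<subseteq> D)"

definition connected_through :: "'a::euclidean_space set \<Rightarrow> 'a set \<Rightarrow> 'a \<Rightarrow> bool" where
  "connected_through C D \<alpha> \<longleftrightarrow>
     (\<exists>U. openin (top_of_set (hyp \<alpha>)) U \<and> U \<noteq> {} \<and> U \<subseteq> closure C \<inter> closure D \<inter> hyp \<alpha>)"

definition pos_sys :: "'a::euclidean_space set \<Rightarrow> 'a set \<Rightarrow> 'a set" where
  "pos_sys \<Phi> C = {\<alpha>\<in>\<Phi>. \<forall>e\<in>C. inner e \<alpha> > 0}"

definition simple_system :: "'a::euclidean_space set \<Rightarrow> 'a set \<Rightarrow> bool" where
  "simple_system \<Phi> S \<longleftrightarrow> S \<subseteq> \<Phi> \<and> independent S \<and>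
     (\<forall>\<alpha>\<in>\<Phi>. \<exists>c. \<alpha> = (\<Sum>s\<in>S. c s *\<^sub>R s) \<and> ((\<forall>s\<in>S. c s \<ge> 0) \<or> (\<forall>s\<in>S. c s \<le> 0)))"

definition simple_of :: "'a::euclidean_space set \<Rightarrow> 'a set \<Rightarrow> 'a set" where
  "simple_of \<Phi> C = (THE S. simple_system \<Phi> S \<and> S \<subseteq> pos_sys \<Phi> C)"

definition lifts :: "'a::euclidean_space set \<Rightarrow> 'a set \<Rightarrow> 'a set \<Rightarrow> 'a set \<Rightarrow> bool" where
  "lifts \<Phi> \<Psi> C D \<longleftrightarrow> C \<in> chambers \<Phi> \<and> D \<in> chambers \<Psi> \<and> simple_of \<Psi> D \<subseteq> simple_of \<Phi> C"

text \<open>A gallery \<open>(C_0, L_{\<alpha>_1}, C_1, \<dots>, L_{\<alpha>_n}, C_n)\<close> is represented as the pair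
  \<open>([C_0,\<dots>,C_n], [\<alpha>_1,\<dots>,\<alpha>_n])\<close>; so \<open>C_j = fst \<Gamma> ! j\<close> and \<open>\<alpha>_j = snd \<Gamma> ! (j-1)\<close>.\<close>
type_synonym 'a gallery = "'a set list \<times> 'a list"

definition glen :: "'a gallery \<Rightarrow> nat" where
  "glen \<Gamma> = length (snd \<Gamma>)"

definition gch :: "'a gallery \<Rightarrow> nat \<Rightarrow> 'a set" where
  "gch \<Gamma> j = fst \<Gamma> ! j"

definition groot :: "'a gallery \<Rightarrow> nat \<Rightarrow> 'a" where
  "groot \<Gamma> j = snd \<Gamma> ! (j - 1)"

definition gallery :: "'a::euclidean_space set \<Rightarrow> 'a gallery \<Rightarrow> bool" where
  "gallery X \<Gamma> \<longleftrightarrow> length (fst \<Gamma>) = Suc (glen \<Gamma>) \<and>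
     (\<forall>j\<le>glen \<Gamma>. gch \<Gamma> j \<in> chambers X) \<and>
     (\<forall>j\<in>{1..glen \<Gamma>}. groot \<Gamma> j \<in> X \<and> connected_through (gch \<Gamma> (j-1)) (gch \<Gamma> j) (groot \<Gamma> j))"

definition walls :: "'a::euclidean_space gallery \<Rightarrow> 'a set list" where
  "walls \<Gamma> = map hyp (snd \<Gamma>)"

definition idx_list :: "'a set \<Rightarrow> 'a gallery \<Rightarrow> nat list" where
  "idx_list \<Psi> \<Gamma> = filter (\<lambda>i. groot \<Gamma> i \<in> \<Psi>) [1..<Suc (glen \<Gamma>)]"

definition I_idx :: "'a set \<Rightarrow> 'a gallery \<Rightarrow> nat set" where
  "I_idx \<Psi> \<Gamma> = {i\<in>{1..glen \<Gamma>}. groot \<Gamma> i \<in> \<Psi>}"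

definition restrict_gal :: "'a::euclidean_space set \<Rightarrow> 'a gallery \<Rightarrow> 'a gallery" where
  "restrict_gal \<Psi> \<Gamma> =
     (map (\<lambda>i. subch \<Psi> (gch \<Gamma> i)) (0 # idx_list \<Psi> \<Gamma>),
      map (\<lambda>i. groot \<Gamma> i) (idx_list \<Psi> \<Gamma>))"

definition gallery_lifts :: "'a::euclidean_space set \<Rightarrow> 'a set \<Rightarrow> 'a gallery \<Rightarrow> 'a gallery \<Rightarrow> bool" where
  "gallery_lifts \<Phi> \<Psi> \<Delta> \<Gamma>' \<longleftrightarrow> walls \<Delta> = walls \<Gamma>' \<and>
     (\<forall>j\<le>glen \<Delta>. lifts \<Phi> \<Psi> (gch \<Delta> j) (gch \<Gamma>' j))"

definition p_pair :: "'a::euclidean_space gallery \<Rightarrow> 'a gallery \<Rightarrow> (nat \<Rightarrow> nat) \<Rightarrow> bool" where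
  "p_pair \<Delta> \<Gamma> p \<longleftrightarrow> p ` {1..glen \<Delta>} \<subseteq> {1..glen \<Gamma>} \<and> strict_mono_on {1..glen \<Delta>} p \<and>
     (\<forall>i\<in>{1..glen \<Delta>}. hyp (groot \<Gamma> (p i)) = hyp (groot \<Delta> i))"

definition same_side :: "'a::euclidean_space \<Rightarrow> 'a set \<Rightarrow> 'a set \<Rightarrow> bool" where
  "same_side \<beta> A B \<longleftrightarrow>
     (A \<subseteq> {x. inner x \<beta> > 0} \<and> B \<subseteq> {x. inner x \<beta> > 0}) \<or>
     (A \<subseteq> {x. inner x \<beta> < 0} \<and> B \<subseteq> {x. inner x \<beta> < 0})"

definition pair_sign :: "'a::euclidean_space gallery \<Rightarrow> 'a gallery \<Rightarrow> (nat \<Rightarrow> nat) \<Rightarrow> nat \<Rightarrow> int" where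
  "pair_sign \<Delta> \<Gamma> p i = (if same_side (groot \<Delta> i) (gch \<Delta> i) (gch \<Gamma> (p i)) then 1 else -1)"

definition pair_cosign :: "'a::euclidean_space gallery \<Rightarrow> 'a gallery \<Rightarrow> (nat \<Rightarrow> nat) \<Rightarrow> nat \<Rightarrow> int" where
  "pair_cosign \<Delta> \<Gamma> p i = (if same_side (groot \<Delta> i) (gch \<Delta> (i-1)) (gch \<Gamma> (p i - 1)) then 1 else -1)"

end

theory Submission
  imports Defs
begin

text \<open>A chamber \<open>C\<close> of \<open>\<Phi>\<close> that lifts a chamber \<open>D\<close> of \<open>\<Psi>\<close> is contained in \<open>D\<close>: the simple
  roots of \<open>D\<close> are simple roots of \<open>C\<close>, hence positive on \<open>C\<close>, and every positive root of \<open>D\<close>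
  is a nonnegative combination of them. On the other hand, crossing a wall \<open>L\<^sub>\<alpha>\<close> with
  \<open>\<alpha> \<notin> \<Psi>\<close> does not change the chamber of \<open>\<Psi>\<close>, because \<open>L\<^sub>\<alpha>\<close> lies in no wall of \<open>\<Psi>\<close>. So if
  \<open>L\<^sub>\<beta>\<close> is the \<open>i\<close>-th wall of \<open>\<Gamma>\<^sub>\<Psi>\<close>, crossed by \<open>\<Gamma>\<close> at step \<open>k = p(i)\<close>, then \<open>D\<^sub>i\<close> and \<open>C\<^sub>k\<close> both lie in
  the \<open>i\<close>-th chamber of \<open>\<Gamma>\<^sub>\<Psi>\<close>, and \<open>D\<^sub>i\<^sub>-\<^sub>1\<close> and \<open>C\<^sub>k\<^sub>-\<^sub>1\<close> both lie in its \<open>(i-1)\<close>-th chamber. A chamber of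
  \<open>\<Psi>\<close> is on one side of \<open>L\<^sub>\<beta>\<close>, which gives positivity of sign and cosign.\<close>

section \<open>Chambers\<close>

abbreviation regular_points :: "'a::euclidean_space set \<Rightarrow> 'a set" where
  "regular_points X \<equiv> UNIV - (\<Union>\<alpha>\<in>X. hyp \<alpha>)"

lemma
  assumes "C \<in> chambers X"
  shows chamber_nonempty: "C \<noteq> {}"
    and connected_chamber: "connected C"
    and chamber_subset_regular_points: "C \<subseteq> regular_points X"
  using assms unfolding chambers_def
  by (auto dest: in_components_nonempty in_components_connected in_components_subset)

lemma inner_chamber_nonzero:
  assumes "C \<in> chambers X" "\<alpha> \<in> X" "x \<in> C"
  shows "inner x \<alpha> \<noteq> 0"
  using chamber_subset_regular_points[OF assms(1)] assms(2,3) unfolding hyp_def by auto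

lemma connected_inner_sign_const:
  fixes b :: "'a::euclidean_space"
  assumes "connected C" "\<forall>x\<in>C. inner x b \<noteq> 0"
  shows "C \<subseteq> {x. inner x b > 0} \<or> C \<subseteq> {x. inner x b < 0}"
proof (rule ccontr)
  assume "\<not> ?thesis"
  then obtain x y where "x \<in> C" "y \<in> C" "inner b x \<le> 0" "0 \<le> inner b y"
    by (force simp: inner_commute)
  with connected_ivt_hyperplane[OF assms(1)] obtain z where "z \<in> C" "inner b z = 0" by blast
  with assms(2) show False by (metis inner_commute)
qed

lemma same_side_if_subset_connected:
  assumes "connected C" "\<forall>x\<in>C. inner x \<beta> \<noteq> 0" "A \<subseteq> C" "B \<subseteq> C"
  shows "same_side \<beta> A B"
  using connected_inner_sign_const[OF assms(1,2)] assms(3,4) unfolding same_side_def by blast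

lemma chamber_eq_connected_component:
  assumes "C \<in> chambers X" "x \<in> C"
  shows "C = connected_component_set (regular_points X) x"
proof -
  from assms(1) obtain y where "C = connected_component_set (regular_points X) y"
    unfolding chambers_def components_iff by blast
  with assms(2) show ?thesis by (metis connected_component_eq mem_Collect_eq)
qed

lemma subch_eq_connected_component:
  assumes "\<Psi> \<subseteq> \<Phi>" "C \<in> chambers \<Phi>" "x \<in> C"
  shows "subch \<Psi> C = connected_component_set (regular_points \<Psi>) x"
proof -
  let ?D = "connected_component_set (regular_points \<Psi>) x"
  have "C \<subseteq> regular_points \<Psi>"
    using chamber_subset_regular_points[OF assms(2)] assms(1) by blast
  then have "?D \<in> chambers \<Psi>" and "C \<subseteq> ?D"
    using assms(3) connected_component_maximal[OF assms(3) connected_chamber[OF assms(2)]]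
    unfolding chambers_def components_iff by blast+
  then show ?thesis
    unfolding subch_def using chamber_eq_connected_component assms(3)
    by (intro the_equality) blast+
qed

lemma
  assumes "\<Psi> \<subseteq> \<Phi>" "C \<in> chambers \<Phi>"
  shows subch_in_chambers: "subch \<Psi> C \<in> chambers \<Psi>"
    and subset_subch: "C \<subseteq> subch \<Psi> C"
proof -
  obtain x where x: "x \<in> C" using chamber_nonempty[OF assms(2)] by blast
  have "C \<subseteq> regular_points \<Psi>"
    using chamber_subset_regular_points[OF assms(2)] assms(1) by blast
  then show "subch \<Psi> C \<in> chambers \<Psi>" "C \<subseteq> subch \<Psi> C"
    using subch_eq_connected_component[OF assms x] x
      connected_component_maximal[OF x connected_chamber[OF assms(2)]]
    unfolding chambers_def components_iff by blast+
qed

lemma same_side_subch: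
  assumes "\<Psi> \<subseteq> \<Phi>" "C \<in> chambers \<Phi>" "\<beta> \<in> \<Psi>" "hyp \<gamma> = hyp \<beta>" "A \<subseteq> subch \<Psi> C"
  shows "same_side \<gamma> A C"
proof (rule same_side_if_subset_connected)
  show "connected (subch \<Psi> C)" by (rule connected_chamber[OF subch_in_chambers[OF assms(1,2)]])
  show "\<forall>x\<in>subch \<Psi> C. inner x \<gamma> \<noteq> 0"
    using inner_chamber_nonzero[OF subch_in_chambers[OF assms(1,2)] assms(3)] assms(4)
    unfolding hyp_def by blast
qed (use assms subset_subch[OF assms(1,2)] in auto)

section \<open>Simple systems\<close>

lemma root_system_finite: "root_system R \<Longrightarrow> finite R"
  unfolding root_system_def by blast

lemma root_system_nonzero: "root_system R \<Longrightarrow> \<alpha> \<in> R \<Longrightarrow> \<alpha> \<noteq> 0"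
  unfolding root_system_def by auto

lemma root_system_reduced: "root_system R \<Longrightarrow> \<alpha> \<in> R \<Longrightarrow> c *\<^sub>R \<alpha> \<in> R \<Longrightarrow> c = 1 \<or> c = -1"
  unfolding root_system_def by blast

lemma root_system_refl: "root_system R \<Longrightarrow> \<alpha> \<in> R \<Longrightarrow> \<beta> \<in> R \<Longrightarrow> refl \<alpha> \<beta> \<in> R"
  unfolding root_system_def by blast

lemma root_system_uminus:
  assumes "root_system R" "\<alpha> \<in> R" shows "- \<alpha> \<in> R"
proof -
  have "refl \<alpha> \<alpha> = - \<alpha>"
    using root_system_nonzero[OF assms] unfolding refl_def by (simp add: algebra_simps scaleR_2)
  then show ?thesis using root_system_refl[OF assms assms(2)] by simp
qed

lemma root_subsystem_subset: "root_subsystem \<Phi> \<Psi> \<Longrightarrow> \<Psi> \<subseteq> \<Phi>"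
  unfolding root_subsystem_def by blast

lemma root_system_root_subsystem:
  assumes "root_system \<Phi>" "root_subsystem \<Phi> \<Psi>"
  shows "root_system \<Psi>"
  using assms unfolding root_system_def root_subsystem_def
  by (meson finite_subset subsetD)

lemma pos_sys_or_uminus:
  assumes "root_system R" "C \<in> chambers R" "\<alpha> \<in> R"
  shows "\<alpha> \<in> pos_sys R C \<or> - \<alpha> \<in> pos_sys R C"
  using connected_inner_sign_const[OF connected_chamber[OF assms(2)]]
    inner_chamber_nonzero[OF assms(2,3)] root_system_uminus[OF assms(1,3)] assms(3)
  unfolding pos_sys_def by auto

definition nonneg_cone :: "'a::real_vector set \<Rightarrow> 'a set" where
  "nonneg_cone T = {x. \<exists>c. (\<forall>s\<in>T. c s \<ge> 0) \<and> x = (\<Sum>s\<in>T. c s *\<^sub>R s)}"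

lemma nonneg_cone_zero: "0 \<in> nonneg_cone T"
  unfolding nonneg_cone_def by (auto intro!: exI[of _ "\<lambda>_. 0"])

lemma nonneg_cone_add:
  assumes "x \<in> nonneg_cone T" "y \<in> nonneg_cone T"
  shows "x + y \<in> nonneg_cone T"
proof -
  from assms obtain c d where "\<forall>s\<in>T. c s \<ge> 0" "x = (\<Sum>s\<in>T. c s *\<^sub>R s)"
    and "\<forall>s\<in>T. d s \<ge> 0" "y = (\<Sum>s\<in>T. d s *\<^sub>R s)" unfolding nonneg_cone_def by blast
  then show ?thesis unfolding nonneg_cone_def
    by (intro CollectI exI[of _ "\<lambda>s. c s + d s"]) (simp add: scaleR_add_left sum.distrib)
qed

lemma nonneg_cone_scaleR:
  assumes "x \<in> nonneg_cone T" "a \<ge> 0"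
  shows "a *\<^sub>R x \<in> nonneg_cone T"
proof -
  from assms obtain c where "\<forall>s\<in>T. c s \<ge> 0" "x = (\<Sum>s\<in>T. c s *\<^sub>R s)"
    unfolding nonneg_cone_def by blast
  then show ?thesis unfolding nonneg_cone_def
    by (intro CollectI exI[of _ "\<lambda>s. a * c s"]) (simp add: assms scaleR_sum_right)
qed

lemma nonneg_cone_sum:
  assumes "finite A" "\<forall>a\<in>A. f a \<in> nonneg_cone T" "\<forall>a\<in>A. c a \<ge> 0"
  shows "(\<Sum>a\<in>A. c a *\<^sub>R f a) \<in> nonneg_cone T"
  using assms
  by (induction A rule: finite_induct) (auto intro: nonneg_cone_zero nonneg_cone_add nonneg_cone_scaleR)

lemma in_nonneg_cone: "finite T \<Longrightarrow> t \<in> T \<Longrightarrow> t \<in> nonneg_cone T"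
  unfolding nonneg_cone_def
  by (intro CollectI exI[of _ "\<lambda>s. if s = t then 1 else 0"])
     (simp add: if_distrib[of "\<lambda>x. x *\<^sub>R _"] sum.delta cong: if_cong)

lemma nonneg_cone_mono:
  assumes "finite S" "S \<subseteq> nonneg_cone T"
  shows "nonneg_cone S \<subseteq> nonneg_cone T"
  using nonneg_cone_sum[of S "\<lambda>s. s" T] assms unfolding nonneg_cone_def[of S] by auto

lemma inner_sum_ge_summand:
  assumes "finite S" "\<forall>s\<in>S. inner e s \<ge> 0" "\<forall>s\<in>S. d s \<ge> 0" "t \<in> S"
  shows "d t * inner e t \<le> inner e (\<Sum>s\<in>S. d s *\<^sub>R s)"
  unfolding inner_sum_right inner_scaleR_right
  using assms by (intro member_le_sum) auto

text \<open>Writing \<open>x = \<Sum> d\<^sub>s s\<close>, irredundancy of \<open>s\<^sub>0\<close> forces \<open>d\<^sub>s\<^sub>0 \<ge> a\<close>, and then pairing with \<open>e\<close>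
  gives \<open>(e, x) \<ge> a (e, s\<^sub>0) = (e, v) + (e, x)\<close>.\<close>
lemma irredundant_decomposition_impossible:
  assumes S: "finite S" "\<forall>s\<in>S. inner e s > 0"
    and s0: "s0 \<in> S" "s0 \<notin> nonneg_cone (S - {s0})"
    and v: "v \<in> nonneg_cone (S - {s0})" "inner e v > 0"
    and x: "x \<in> nonneg_cone S"
  shows "a *\<^sub>R s0 \<noteq> v + x"
proof
  assume eq: "a *\<^sub>R s0 = v + x"
  obtain d where d: "\<forall>s\<in>S. d s \<ge> 0" "x = (\<Sum>s\<in>S. d s *\<^sub>R s)"
    using x unfolding nonneg_cone_def by blast
  have "a \<le> d s0"
  proof (rule ccontr)
    assume "\<not> a \<le> d s0"
    have "x = d s0 *\<^sub>R s0 + (\<Sum>s\<in>S - {s0}. d s *\<^sub>R s)"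
      using d(2) S(1) s0(1) by (simp add: sum.remove)
    then have "(a - d s0) *\<^sub>R s0 = v + (\<Sum>s\<in>S - {s0}. d s *\<^sub>R s)"
      using eq by (simp add: algebra_simps)
    also have "\<dots> \<in> nonneg_cone (S - {s0})"
      using v(1) d(1) by (intro nonneg_cone_add) (auto simp: nonneg_cone_def)
    finally have "(1 / (a - d s0)) *\<^sub>R ((a - d s0) *\<^sub>R s0) \<in> nonneg_cone (S - {s0})"
      by (rule nonneg_cone_scaleR) (use \<open>\<not> a \<le> d s0\<close> in simp)
    moreover have "(1 / (a - d s0)) *\<^sub>R ((a - d s0) *\<^sub>R s0) = s0"
      using \<open>\<not> a \<le> d s0\<close> by simp
    ultimately show False using s0(2) by simp
  qed
  moreover have "d s0 * inner e s0 \<le> inner e x"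
    using inner_sum_ge_summand[OF S(1) _ d(1) s0(1), of e] S(2) d(2) by (simp add: less_imp_le)
  ultimately have "a * inner e s0 \<le> inner e x"
    using S(2) s0(1) by (meson less_imp_le mult_right_mono order_trans)
  moreover have "a * inner e s0 = inner e v + inner e x"
    using arg_cong[OF eq, of "inner e"] by (simp add: inner_add_right)
  ultimately show False using v(2) by simp
qed

lemma minimal_generators_obtuse:
  assumes R: "root_system R" and C: "C \<in> chambers R" and e: "e \<in> C"
    and S: "finite S" "S \<subseteq> pos_sys R C" "pos_sys R C \<subseteq> nonneg_cone S"
    and irredundant: "\<forall>s\<in>S. s \<notin> nonneg_cone (S - {s})"
    and \<alpha>\<beta>: "\<alpha> \<in> S" "\<beta> \<in> S" "\<alpha> \<noteq> \<beta>"
  shows "inner \<alpha> \<beta> \<le> 0"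
proof (rule ccontr)
  assume "\<not> inner \<alpha> \<beta> \<le> 0"
  have S_pos: "\<forall>s\<in>S. inner e s > 0" using S(2) e unfolding pos_sys_def by auto
  have \<alpha>\<beta>_roots: "\<alpha> \<in> R" "\<beta> \<in> R" using \<alpha>\<beta> S(2) unfolding pos_sys_def by auto
  define c where "c = 2 * inner \<beta> \<alpha> / inner \<alpha> \<alpha>"
  have "c > 0"
    using \<open>\<not> inner \<alpha> \<beta> \<le> 0\<close> root_system_nonzero[OF R \<alpha>\<beta>_roots(1)]
    unfolding c_def by (simp add: inner_commute)
  define \<gamma> where "\<gamma> = \<beta> - c *\<^sub>R \<alpha>"
  have "\<gamma> \<in> R"
    using root_system_refl[OF R \<alpha>\<beta>_roots] unfolding refl_def \<gamma>_def c_def .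
  have \<alpha>_cone: "\<alpha> \<in> nonneg_cone (S - {\<beta>})" and \<beta>_cone: "\<beta> \<in> nonneg_cone (S - {\<alpha>})"
    using in_nonneg_cone[of "S - {_}"] S(1) \<alpha>\<beta> by auto
  from pos_sys_or_uminus[OF R C \<open>\<gamma> \<in> R\<close>] show False
  proof
    assume "\<gamma> \<in> pos_sys R C"
    moreover have "1 *\<^sub>R \<beta> = c *\<^sub>R \<alpha> + \<gamma>" unfolding \<gamma>_def by simp
    ultimately show False
      using irredundant_decomposition_impossible[OF S(1) S_pos \<alpha>\<beta>(2), of "c *\<^sub>R \<alpha>" \<gamma> 1]
        nonneg_cone_scaleR[OF \<alpha>_cone] irredundant \<alpha>\<beta>(1,2) S(3) S_pos \<open>c > 0\<close> by auto
  next
    assume "- \<gamma> \<in> pos_sys R C"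
    moreover have "c *\<^sub>R \<alpha> = \<beta> + - \<gamma>" unfolding \<gamma>_def by simp
    ultimately show False
      using irredundant_decomposition_impossible[OF S(1) S_pos \<alpha>\<beta>(1), of \<beta> "- \<gamma>" c]
        \<beta>_cone irredundant \<alpha>\<beta>(1,2) S(3) S_pos by auto
  qed
qed

lemma obtuse_nonneg_sums_eq_zero:
  fixes P N :: "'a::real_inner set"
  assumes "\<forall>a\<in>P. \<forall>b\<in>N. inner a b \<le> 0" "\<forall>a\<in>P. c a \<ge> 0" "\<forall>b\<in>N. d b \<ge> 0"
    and eq: "(\<Sum>a\<in>P. c a *\<^sub>R a) = (\<Sum>b\<in>N. d b *\<^sub>R b)"
  shows "(\<Sum>a\<in>P. c a *\<^sub>R a) = 0"
proof -
  let ?\<sigma> = "\<Sum>a\<in>P. c a *\<^sub>R a"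
  have "inner ?\<sigma> ?\<sigma> = inner (\<Sum>a\<in>P. c a *\<^sub>R a) (\<Sum>b\<in>N. d b *\<^sub>R b)"
    by (subst (2) eq) (rule refl)
  also have "\<dots> = (\<Sum>a\<in>P. \<Sum>b\<in>N. (c a * d b) * inner a b)"
    by (simp add: inner_sum_left inner_sum_right sum_distrib_left mult.assoc)
       (subst sum.swap, simp add: mult.left_commute)
  also have "\<dots> \<le> 0"
    using assms(1-3) by (intro sum_nonpos mult_nonneg_nonpos) auto
  finally show ?thesis by (metis inner_gt_zero_iff not_less)
qed

lemma pairwise_obtuse_independent:
  fixes S :: "'a::euclidean_space set"
  assumes fin: "finite S" and pos: "\<forall>s\<in>S. inner e s > 0"
    and obtuse: "\<forall>a\<in>S. \<forall>b\<in>S. a \<noteq> b \<longrightarrow> inner a b \<le> 0"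
  shows "independent S"
proof
  assume "dependent S"
  then obtain u where u: "\<exists>v\<in>S. u v \<noteq> 0" "(\<Sum>v\<in>S. u v *\<^sub>R v) = 0"
    using dependent_finite[OF fin] by blast
  define P where "P = {v\<in>S. u v > 0}"
  define N where "N = {v\<in>S. u v < 0}"
  have "finite P" "finite N" using fin by (auto simp: P_def N_def)
  have "(\<Sum>v\<in>S. u v *\<^sub>R v) = (\<Sum>v\<in>P \<union> N. u v *\<^sub>R v)"
    by (rule sum.mono_neutral_right) (auto simp: fin P_def N_def)
  also have "\<dots> = (\<Sum>v\<in>P. u v *\<^sub>R v) + (\<Sum>v\<in>N. u v *\<^sub>R v)"
    by (rule sum.union_disjoint[OF \<open>finite P\<close> \<open>finite N\<close>]) (auto simp: P_def N_def)
  finally have PN: "(\<Sum>v\<in>P. u v *\<^sub>R v) = (\<Sum>v\<in>N. (- u v) *\<^sub>R v)"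
    using u(2) by (simp add: sum_negf eq_neg_iff_add_eq_0)
  moreover have "\<forall>a\<in>P. \<forall>b\<in>N. inner a b \<le> 0"
    using obtuse unfolding P_def N_def by (metis (mono_tags, lifting) mem_Collect_eq not_less_iff_gr_or_eq)
  ultimately have \<sigma>: "(\<Sum>v\<in>P. u v *\<^sub>R v) = 0" "(\<Sum>v\<in>N. (- u v) *\<^sub>R v) = 0"
    using obtuse_nonneg_sums_eq_zero[of P N u "\<lambda>v. - u v"] by (auto simp: P_def N_def)
  have sums: "(\<Sum>v\<in>P. u v * inner e v) = 0" "(\<Sum>v\<in>N. (- u v) * inner e v) = 0"
    using arg_cong[OF \<sigma>(1), of "inner e"] arg_cong[OF \<sigma>(2), of "inner e"]
    by (simp_all add: inner_sum_right)
  have pos_sum: "0 < (\<Sum>v\<in>A. f v * inner e v)"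
    if "finite A" "A \<noteq> {}" "A \<subseteq> S" "\<forall>v\<in>A. f v > 0" for A f
    using that pos by (intro sum_pos) auto
  have "P \<subseteq> S" "\<forall>v\<in>P. u v > 0" "N \<subseteq> S" "\<forall>v\<in>N. - u v > 0" by (auto simp: P_def N_def)
  then have "P = {}" "N = {}"
    using pos_sum[of P u] pos_sum[of N "\<lambda>v. - u v"] sums \<open>finite P\<close> \<open>finite N\<close> by auto
  then show False
    using u(1) unfolding P_def N_def by (auto simp: neq_iff)
qed

lemma simple_system_if_generates_pos_sys:
  assumes R: "root_system R" and C: "C \<in> chambers R"
    and S: "S \<subseteq> pos_sys R C" "pos_sys R C \<subseteq> nonneg_cone S" "independent S"
  shows "simple_system R S"
proof -
  have "\<exists>c. \<alpha> = (\<Sum>s\<in>S. c s *\<^sub>R s) \<and> ((\<forall>s\<in>S. c s \<ge> 0) \<or> (\<forall>s\<in>S. c s \<le> 0))"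
    if "\<alpha> \<in> R" for \<alpha>
    using pos_sys_or_uminus[OF R C that]
  proof
    assume "\<alpha> \<in> pos_sys R C"
    then show ?thesis using S(2) unfolding nonneg_cone_def by blast
  next
    assume "- \<alpha> \<in> pos_sys R C"
    then obtain c where "\<forall>s\<in>S. c s \<ge> 0" "- \<alpha> = (\<Sum>s\<in>S. c s *\<^sub>R s)"
      using S(2) unfolding nonneg_cone_def by blast
    moreover from this have "\<alpha> = (\<Sum>s\<in>S. (- c s) *\<^sub>R s)"
      by (simp add: sum_negf) (metis minus_minus)
    ultimately show ?thesis by (intro exI[of _ "\<lambda>s. - c s"]) auto
  qed
  moreover have "S \<subseteq> R" using S(1) unfolding pos_sys_def by auto
  ultimately show ?thesis unfolding simple_system_def using S(3) by blast
qed

text \<open>A simple system is obtained as a generating set of the positive cone of minimal cardinality.\<close>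
lemma simple_system_exists:
  assumes R: "root_system R" and C: "C \<in> chambers R"
  shows "\<exists>S. simple_system R S \<and> S \<subseteq> pos_sys R C"
proof -
  let ?P = "pos_sys R C"
  obtain e where e: "e \<in> C" using chamber_nonempty[OF C] by blast
  have "finite ?P" using root_system_finite[OF R] unfolding pos_sys_def by simp
  define generates where "generates T \<longleftrightarrow> T \<subseteq> ?P \<and> ?P \<subseteq> nonneg_cone T" for T
  have "generates ?P" unfolding generates_def using in_nonneg_cone[OF \<open>finite ?P\<close>] by blast
  from ex_has_least_nat[of generates, OF this, where m=card]
  obtain S where gen: "generates S" and min: "\<And>T. generates T \<Longrightarrow> card S \<le> card T" by blast
  have S: "S \<subseteq> ?P" "?P \<subseteq> nonneg_cone S" using gen unfolding generates_def by auto
  have "finite S" using S(1) \<open>finite ?P\<close> finite_subset by blast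
  have irredundant: "\<forall>s\<in>S. s \<notin> nonneg_cone (S - {s})"
  proof (intro ballI notI)
    fix s assume "s \<in> S" "s \<in> nonneg_cone (S - {s})"
    then have "S \<subseteq> nonneg_cone (S - {s})"
      using in_nonneg_cone[of "S - {s}"] \<open>finite S\<close> by auto
    then have "generates (S - {s})"
      using nonneg_cone_mono[OF \<open>finite S\<close>] S unfolding generates_def by blast
    then have "card S \<le> card (S - {s})" by (rule min)
    moreover have "card (S - {s}) < card S" using \<open>s \<in> S\<close> \<open>finite S\<close> by (meson card_Diff1_less)
    ultimately show False by simp
  qed
  have "independent S"
    using pairwise_obtuse_independent[OF \<open>finite S\<close>, of e] S(1) e
      minimal_generators_obtuse[OF R C e \<open>finite S\<close> S irredundant]
    unfolding pos_sys_def by blast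
  then show ?thesis using simple_system_if_generates_pos_sys[OF R C S] S(1) by blast
qed

lemma pos_sys_subset_nonneg_cone:
  assumes S: "simple_system R S" "S \<subseteq> pos_sys R C" and "e \<in> C"
  shows "pos_sys R C \<subseteq> nonneg_cone S"
proof
  fix \<alpha> assume \<alpha>: "\<alpha> \<in> pos_sys R C"
  then obtain c where c: "\<alpha> = (\<Sum>s\<in>S. c s *\<^sub>R s)" "(\<forall>s\<in>S. c s \<ge> 0) \<or> (\<forall>s\<in>S. c s \<le> 0)"
    using S(1) unfolding simple_system_def pos_sys_def by blast
  have "\<forall>s\<in>S. c s \<ge> 0"
  proof (rule ccontr)
    assume "\<not> (\<forall>s\<in>S. c s \<ge> 0)"
    then have "\<forall>s\<in>S. c s \<le> 0" using c(2) by blast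
    then have "(\<Sum>s\<in>S. c s * inner e s) \<le> 0"
      using S(2) \<open>e \<in> C\<close> unfolding pos_sys_def
      by (intro sum_nonpos mult_nonpos_nonneg) (auto intro: less_imp_le)
    moreover have "inner e \<alpha> = (\<Sum>s\<in>S. c s * inner e s)" using c(1) by (simp add: inner_sum_right)
    ultimately show False using \<alpha> \<open>e \<in> C\<close> unfolding pos_sys_def by auto
  qed
  then show "\<alpha> \<in> nonneg_cone S" using c unfolding nonneg_cone_def by blast
qed

lemma independent_sum_coeffs_eq:
  fixes S :: "'a::real_vector set"
  assumes "finite S" "independent S" "(\<Sum>t\<in>S. f t *\<^sub>R t) = (\<Sum>t\<in>S. g t *\<^sub>R t)" "t \<in> S"
  shows "f t = g t"
proof -
  have "(\<Sum>t\<in>S. (f t - g t) *\<^sub>R t) = 0"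
    unfolding scaleR_diff_left sum_subtractf assms(3) by (rule diff_self)
  moreover have "\<forall>u. (\<Sum>v\<in>S. u v *\<^sub>R v) = 0 \<longrightarrow> (\<forall>v\<in>S. u v = 0)"
    using assms(2) unfolding dependent_finite[OF assms(1)] by blast
  ultimately show ?thesis using assms(4) by fastforce
qed

text \<open>Composing the two nonnegative expansions and comparing coordinates in the basis \<open>T\<close> shows
  that every \<open>s\<close> occurring in the expansion of \<open>t\<close> is a multiple of \<open>t\<close>.\<close>
lemma mutual_nonneg_cone_multiple:
  fixes S T :: "'a::real_vector set"
  assumes fin: "finite S" "finite T" and indep: "independent T"
    and S: "S \<subseteq> nonneg_cone T" and t: "t \<in> T" "t \<in> nonneg_cone S" "t \<noteq> 0"
  shows "\<exists>s\<in>S. \<exists>k. s = k *\<^sub>R t"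
proof -
  obtain a where a: "t = (\<Sum>s\<in>S. a s *\<^sub>R s)" "\<forall>s\<in>S. a s \<ge> 0"
    using t(2) unfolding nonneg_cone_def by blast
  have "\<forall>s\<in>S. \<exists>b. s = (\<Sum>r\<in>T. b r *\<^sub>R r) \<and> (\<forall>r\<in>T. b r \<ge> 0)"
    using S unfolding nonneg_cone_def by blast
  then obtain b where b: "\<And>s. s \<in> S \<Longrightarrow> s = (\<Sum>r\<in>T. b s r *\<^sub>R r)"
    "\<And>s r. s \<in> S \<Longrightarrow> r \<in> T \<Longrightarrow> b s r \<ge> 0"
    by metis
  obtain s0 where s0: "s0 \<in> S" "a s0 > 0"
    using a t(3) by (metis (no_types, lifting) order_le_less scale_zero_left sum.neutral)
  have "(\<Sum>r\<in>T. (\<Sum>s\<in>S. a s * b s r) *\<^sub>R r) = (\<Sum>s\<in>S. a s *\<^sub>R (\<Sum>r\<in>T. b s r *\<^sub>R r))"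
    by (simp add: scaleR_sum_right scaleR_sum_left sum.swap[of _ T])
  also have "\<dots> = t" using a(1) b(1) by simp
  also have "\<dots> = (\<Sum>r\<in>T. (if r = t then 1 else 0) *\<^sub>R r)"
    using fin(2) t(1) by (simp add: if_distrib[of "\<lambda>x. x *\<^sub>R _"] sum.delta cong: if_cong)
  finally have expansions: "(\<Sum>r\<in>T. (\<Sum>s\<in>S. a s * b s r) *\<^sub>R r) = (\<Sum>r\<in>T. (if r = t then 1 else 0) *\<^sub>R r)" .
  have coeff: "(\<Sum>s\<in>S. a s * b s r) = (if r = t then 1 else 0)" if "r \<in> T" for r
    using independent_sum_coeffs_eq[OF fin(2) indep expansions that] .
  have "b s0 r = 0" if "r \<in> T" "r \<noteq> t" for r
  proof -
    have "\<forall>s\<in>S. a s * b s r = 0"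
      using coeff[OF that(1)] that a(2) b(2) by (subst sum_nonneg_eq_0_iff[OF fin(1), symmetric]) auto
    then show ?thesis using s0 by fastforce
  qed
  then have "(\<Sum>r\<in>T. b s0 r *\<^sub>R r) = b s0 t *\<^sub>R t"
    using fin(2) t(1) by (simp add: sum.remove[of T t])
  then show ?thesis using b(1)[OF s0(1)] s0(1) by metis
qed

lemma simple_systems_pos_sys_subset:
  assumes R: "root_system R"
    and S: "simple_system R S" "S \<subseteq> pos_sys R C"
    and T: "simple_system R T" "T \<subseteq> pos_sys R C" and e: "e \<in> C"
  shows "T \<subseteq> S"
proof
  fix t assume "t \<in> T"
  have fin: "finite S" "finite T"
    using S(1) T(1) root_system_finite[OF R] finite_subset unfolding simple_system_def by metis+
  have t: "t \<in> pos_sys R C" "t \<in> R" using \<open>t \<in> T\<close> T(2) unfolding pos_sys_def by auto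
  obtain s k where s: "s \<in> S" "s = k *\<^sub>R t"
    using mutual_nonneg_cone_multiple[OF fin _ _ \<open>t \<in> T\<close>]
      pos_sys_subset_nonneg_cone[OF S e] pos_sys_subset_nonneg_cone[OF T e] S(2) T(1) t
      root_system_nonzero[OF R t(2)] unfolding simple_system_def by blast
  have "s \<in> pos_sys R C" using s(1) S(2) by blast
  then have "k = 1 \<or> k = -1" "inner e s > 0" "inner e t > 0"
    using root_system_reduced[OF R t(2)] s t(1) e unfolding pos_sys_def by auto
  then have "k = 1" using s(2) by auto
  then show "t \<in> S" using s by simp
qed

lemma
  assumes R: "root_system R" and C: "C \<in> chambers R"
  shows simple_system_simple_of: "simple_system R (simple_of R C)"
    and simple_of_subset_pos_sys: "simple_of R C \<subseteq> pos_sys R C"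
proof -
  obtain S where S: "simple_system R S" "S \<subseteq> pos_sys R C"
    using simple_system_exists[OF R C] by blast
  obtain e where "e \<in> C" using chamber_nonempty[OF C] by blast
  have "\<exists>!S. simple_system R S \<and> S \<subseteq> pos_sys R C"
    using S simple_systems_pos_sys_subset[OF R _ _ _ _ \<open>e \<in> C\<close>] by (metis subset_antisym)
  then show "simple_system R (simple_of R C)" "simple_of R C \<subseteq> pos_sys R C"
    unfolding simple_of_def by (metis (mono_tags, lifting) theI')+
qed

lemma in_chamber_if_pos_sys_pos:
  assumes R: "root_system X" and C: "C \<in> chambers X"
    and x: "\<forall>\<alpha>\<in>pos_sys X C. inner x \<alpha> > 0"
  shows "x \<in> C"
proof -
  obtain y where "y \<in> C" using chamber_nonempty[OF C] by blast
  have "closed_segment y x \<subseteq> regular_points X"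
  proof -
    have "closed_segment y x \<subseteq> {z. inner z \<alpha> > 0}" if "\<alpha> \<in> pos_sys X C" for \<alpha>
      using \<open>y \<in> C\<close> that x convex_halfspace_gt[of 0 \<alpha>]
      by (intro closed_segment_subset) (auto simp: pos_sys_def inner_commute)
    moreover have "\<alpha> \<in> pos_sys X C \<or> - \<alpha> \<in> pos_sys X C" if "\<alpha> \<in> X" for \<alpha>
      using pos_sys_or_uminus[OF R C that] .
    ultimately show ?thesis unfolding hyp_def by fastforce
  qed
  then have "closed_segment y x \<subseteq> connected_component_set (regular_points X) y"
    by (intro connected_component_maximal) auto
  then show "x \<in> C" using chamber_eq_connected_component[OF C \<open>y \<in> C\<close>] by auto
qed

lemma lifts_subset:
  assumes R: "root_system \<Phi>" and sub: "root_subsystem \<Phi> \<Psi>" and lifts: "lifts \<Phi> \<Psi> C D"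
  shows "C \<subseteq> D"
proof
  fix x assume "x \<in> C"
  have C: "C \<in> chambers \<Phi>" and D: "D \<in> chambers \<Psi>"
    and simple: "simple_of \<Psi> D \<subseteq> simple_of \<Phi> C"
    using lifts unfolding lifts_def by auto
  have R\<Psi>: "root_system \<Psi>" using root_system_root_subsystem[OF R sub] .
  obtain y where "y \<in> D" using chamber_nonempty[OF D] by blast
  have "inner x \<alpha> > 0" if \<alpha>: "\<alpha> \<in> pos_sys \<Psi> D" for \<alpha>
  proof -
    have "\<forall>s\<in>simple_of \<Psi> D. inner x s > 0"
      using simple simple_of_subset_pos_sys[OF R C] \<open>x \<in> C\<close> unfolding pos_sys_def by auto
    moreover obtain c where "\<alpha> = (\<Sum>s\<in>simple_of \<Psi> D. c s *\<^sub>R s)" "\<forall>s\<in>simple_of \<Psi> D. c s \<ge> 0"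
      using pos_sys_subset_nonneg_cone[OF simple_system_simple_of[OF R\<Psi> D]
          simple_of_subset_pos_sys[OF R\<Psi> D] \<open>y \<in> D\<close>] \<alpha>
      unfolding nonneg_cone_def by blast
    ultimately have "inner x \<alpha> \<ge> 0" by (auto simp: inner_sum_right intro!: sum_nonneg)
    moreover have "inner x \<alpha> \<noteq> 0"
      using inner_chamber_nonzero[OF C _ \<open>x \<in> C\<close>] \<alpha> root_subsystem_subset[OF sub]
      unfolding pos_sys_def by blast
    ultimately show ?thesis by simp
  qed
  then show "x \<in> D" using in_chamber_if_pos_sys_pos[OF R\<Psi> D] by blast
qed

section \<open>Crossing walls outside a subsystem\<close>

lemma hyp_not_subset_hyp:
  assumes R: "root_system \<Phi>" and sub: "root_subsystem \<Phi> \<Psi>"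
    and \<alpha>: "\<alpha> \<in> \<Phi>" "\<alpha> \<notin> \<Psi>" and \<beta>: "\<beta> \<in> \<Psi>"
  shows "\<exists>w\<in>hyp \<alpha>. inner w \<beta> \<noteq> 0"
proof (rule ccontr)
  assume "\<not> ?thesis"
  define k where "k = inner \<beta> \<alpha> / inner \<alpha> \<alpha>"
  define w where "w = \<beta> - k *\<^sub>R \<alpha>"
  have "inner w \<alpha> = 0"
    unfolding w_def k_def using root_system_nonzero[OF R \<alpha>(1)] by (simp add: inner_diff_left)
  with \<open>\<not> ?thesis\<close> have "inner w \<beta> = 0" unfolding hyp_def by auto
  then have "inner w w = 0"
    using \<open>inner w \<alpha> = 0\<close> unfolding w_def by (simp add: inner_diff_right inner_commute)
  then have "\<beta> = k *\<^sub>R \<alpha>" unfolding w_def by simp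
  then have "k = 1 \<or> k = -1"
    using root_system_reduced[OF R \<alpha>(1)] \<beta> root_subsystem_subset[OF sub] by auto
  then have "\<alpha> = \<beta> \<or> \<alpha> = - \<beta>" using \<open>\<beta> = k *\<^sub>R \<alpha>\<close> by auto
  then show False
    using \<alpha>(2) \<beta> root_system_uminus[OF root_system_root_subsystem[OF R sub] \<beta>] by auto
qed

lemma finite_affine_zeros: "a \<noteq> 0 \<or> b \<noteq> 0 \<Longrightarrow> finite {t::real. a + t * b = 0}"
  by (cases "b = 0") (auto intro: finite_subset[of _ "{- a / b}"] simp: field_simps)

lemma subspace_point_avoiding_hyperplanes:
  fixes V :: "'a::euclidean_space set"
  assumes V: "subspace V" and B: "finite B" "\<forall>\<beta>\<in>B. \<exists>w\<in>V. inner w \<beta> \<noteq> 0"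
    and "u \<in> V" "\<epsilon> > 0"
  shows "\<exists>z\<in>V. dist u z < \<epsilon> \<and> (\<forall>\<beta>\<in>B. inner z \<beta> \<noteq> 0)"
  using B
proof (induction B rule: finite_induct)
  case empty
  then show ?case using \<open>u \<in> V\<close> \<open>\<epsilon> > 0\<close> by (metis dist_self empty_iff)
next
  case (insert \<gamma> B)
  then obtain z where z: "z \<in> V" "dist u z < \<epsilon>" "\<forall>\<beta>\<in>B. inner z \<beta> \<noteq> 0" by auto
  obtain w where w: "w \<in> V" "inner w \<gamma> \<noteq> 0" using insert.prems by auto
  define M where "M = (\<epsilon> - dist u z) / (norm w + 1)"
  have "M > 0" unfolding M_def using z(2) by (simp add: add_nonneg_pos)
  \<comment> \<open>Move \<open>z\<close> along \<open>w\<close>; only finitely many parameters put \<open>z + t w\<close> on a hyperplane.\<close>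
  define bad where "bad = (\<Union>\<beta>\<in>insert \<gamma> B. {t. inner z \<beta> + t * inner w \<beta> = 0})"
  have "finite bad"
    unfolding bad_def using insert.hyps(1) z(3) w(2) by (auto intro!: finite_affine_zeros)
  then have "infinite ({0<..<M} - bad)" using \<open>M > 0\<close> by (simp add: Diff_infinite_finite)
  then obtain t where t: "t \<in> {0<..<M}" "t \<notin> bad" using infinite_imp_nonempty by blast
  have "dist u (z + t *\<^sub>R w) \<le> dist u z + t * norm w"
    using dist_triangle[of u "z + t *\<^sub>R w" z] t(1) by (simp add: dist_norm)
  also have "t * norm w \<le> M * norm w" using t(1) by (simp add: mult_right_mono)
  also have "M * norm w < \<epsilon> - dist u z"
    using z(2) unfolding M_def by (simp add: divide_less_eq add_nonneg_pos)
  finally have "dist u (z + t *\<^sub>R w) < \<epsilon>" by simp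
  moreover have "z + t *\<^sub>R w \<in> V" using V z(1) w(1) by (simp add: subspace_add subspace_scale)
  moreover have "\<forall>\<beta>\<in>insert \<gamma> B. inner (z + t *\<^sub>R w) \<beta> \<noteq> 0"
    using t(2) unfolding bad_def by (auto simp: inner_add_left)
  ultimately show ?case by blast
qed

lemma closed_hyp: "closed (hyp \<alpha>)"
  unfolding hyp_def by (intro closed_Collect_eq) (auto intro: continuous_intros)

lemma open_regular_points: "finite X \<Longrightarrow> open (regular_points X)"
  by (intro open_Diff open_UNIV closed_UN) (auto simp: closed_hyp)

text \<open>A point of the common face off all walls of \<open>\<Psi>\<close> has a ball disjoint from those walls,
  and the ball meets both chambers.\<close>
lemma connected_through_subch_eq:
  assumes R: "root_system \<Phi>" and sub: "root_subsystem \<Phi> \<Psi>"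
    and C: "C1 \<in> chambers \<Phi>" "C2 \<in> chambers \<Phi>"
    and \<alpha>: "\<alpha> \<in> \<Phi>" "\<alpha> \<notin> \<Psi>" and adjacent: "connected_through C1 C2 \<alpha>"
  shows "subch \<Psi> C1 = subch \<Psi> C2"
proof -
  have fin: "finite \<Psi>" using root_system_finite[OF root_system_root_subsystem[OF R sub]] .
  obtain U where U: "openin (top_of_set (hyp \<alpha>)) U" "U \<noteq> {}"
    "U \<subseteq> closure C1 \<inter> closure C2 \<inter> hyp \<alpha>"
    using adjacent unfolding connected_through_def by blast
  obtain u where "u \<in> U" using U(2) by blast
  then obtain \<epsilon> where "\<epsilon> > 0" and \<epsilon>: "\<forall>x\<in>hyp \<alpha>. dist x u < \<epsilon> \<longrightarrow> x \<in> U"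
    using U(1) unfolding openin_euclidean_subtopology_iff by blast
  have "subspace (hyp \<alpha>)" unfolding hyp_def by (simp add: subspace_hyperplane2)
  moreover have "\<forall>\<beta>\<in>\<Psi>. \<exists>w\<in>hyp \<alpha>. inner w \<beta> \<noteq> 0" using hyp_not_subset_hyp[OF R sub \<alpha>] by blast
  moreover have "u \<in> hyp \<alpha>" using \<open>u \<in> U\<close> U(3) by blast
  ultimately obtain z where z: "z \<in> hyp \<alpha>" "dist u z < \<epsilon>" "\<forall>\<beta>\<in>\<Psi>. inner z \<beta> \<noteq> 0"
    using subspace_point_avoiding_hyperplanes[OF _ fin _ _ \<open>\<epsilon> > 0\<close>] by blast
  have "z \<in> U" using \<epsilon> z(1,2) by (metis dist_commute)
  have "z \<in> regular_points \<Psi>" using z(3) unfolding hyp_def by blast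
  then obtain r where "r > 0" and r: "ball z r \<subseteq> regular_points \<Psi>"
    using open_contains_ball_eq[OF open_regular_points[OF fin]] by metis
  have "\<exists>y\<in>C. y \<in> ball z r" if "z \<in> closure C" for C
    using that \<open>r > 0\<close> unfolding closure_approachable mem_ball by (metis dist_commute)
  then obtain a b where ab: "a \<in> C1" "b \<in> C2" "a \<in> ball z r" "b \<in> ball z r"
    using \<open>z \<in> U\<close> U(3) by (meson IntD1 IntD2 subsetD)
  have "ball z r \<subseteq> connected_component_set (regular_points \<Psi>) a"
    using connected_component_maximal[OF ab(3) connected_ball r] .
  then have "connected_component_set (regular_points \<Psi>) b = connected_component_set (regular_points \<Psi>) a"
    using ab(4) by (intro connected_component_eq) blast
  moreover have "subch \<Psi> C1 = connected_component_set (regular_points \<Psi>) a"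
    "subch \<Psi> C2 = connected_component_set (regular_points \<Psi>) b"
    using subch_eq_connected_component[OF root_subsystem_subset[OF sub]] C ab(1,2) by blast+
  ultimately show ?thesis by simp
qed

lemma gallery_subch_eq:
  assumes R: "root_system \<Phi>" and sub: "root_subsystem \<Phi> \<Psi>" and \<Gamma>: "gallery \<Phi> \<Gamma>"
    and "k0 \<le> k1" "k1 \<le> glen \<Gamma>" and "\<forall>j. k0 < j \<and> j \<le> k1 \<longrightarrow> groot \<Gamma> j \<notin> \<Psi>"
  shows "subch \<Psi> (gch \<Gamma> k0) = subch \<Psi> (gch \<Gamma> k1)"
  using assms(4-)
proof (induction k1 rule: dec_induct)
  case (step k)
  have "Suc k \<in> {1..glen \<Gamma>}" using step by auto
  then have "groot \<Gamma> (Suc k) \<in> \<Phi> \<and>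
      connected_through (gch \<Gamma> (Suc k - 1)) (gch \<Gamma> (Suc k)) (groot \<Gamma> (Suc k))"
    using \<Gamma> unfolding gallery_def by blast
  moreover have "gch \<Gamma> k \<in> chambers \<Phi>" "gch \<Gamma> (Suc k) \<in> chambers \<Phi>"
    using \<Gamma> \<open>Suc k \<in> {1..glen \<Gamma>}\<close> unfolding gallery_def by auto
  moreover have "groot \<Gamma> (Suc k) \<notin> \<Psi>" using step.hyps(1) step.prems by auto
  moreover have "subch \<Psi> (gch \<Gamma> k0) = subch \<Psi> (gch \<Gamma> k)" using step by auto
  ultimately show ?case using connected_through_subch_eq[OF R sub] by auto
qed simp

section \<open>Restricted galleries\<close>

lemma strict_mono_on_onto_sorted_list:
  fixes L :: "nat list"
  assumes "sorted_wrt (<) L" "strict_mono_on {1..length L} p" "p ` {1..length L} = set L"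
    and "i \<in> {1..length L}"
  shows "p i = L ! (i - 1)"
proof -
  have "sorted_wrt (<) (map p [1..<Suc (length L)])"
    unfolding sorted_wrt_map
    by (rule sorted_wrt_mono_rel[OF _ sorted_wrt_upt]) (auto intro: strict_mono_onD[OF assms(2)])
  moreover have "set (map p [1..<Suc (length L)]) = set L"
    using assms(3) by (simp only: set_map set_upt atLeastLessThanSuc_atLeastAtMost)
  ultimately have "map p [1..<Suc (length L)] = L"
    using assms(1) by (intro sorted_distinct_set_unique) (auto simp: strict_sorted_iff)
  then show ?thesis using assms(4) nth_map_upt[of "i - 1" "Suc (length L)" 1 p] by auto
qed

lemma
  assumes "gallery_lifts \<Phi> \<Psi> \<Delta> \<Gamma>'"
  shows gallery_lifts_glen: "glen \<Delta> = glen \<Gamma>'"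
    and gallery_lifts_hyp: "i \<in> {1..glen \<Delta>} \<Longrightarrow> hyp (groot \<Delta> i) = hyp (groot \<Gamma>' i)"
proof -
  have walls: "map hyp (snd \<Delta>) = map hyp (snd \<Gamma>')"
    using assms unfolding gallery_lifts_def walls_def by blast
  then show "glen \<Delta> = glen \<Gamma>'" unfolding glen_def by (metis length_map)
  show "hyp (groot \<Delta> i) = hyp (groot \<Gamma>' i)" if "i \<in> {1..glen \<Delta>}"
    using that nth_map[of "i - 1" _ hyp] arg_cong[OF walls, of "\<lambda>xs. xs ! (i - 1)"]
      \<open>glen \<Delta> = glen \<Gamma>'\<close> unfolding groot_def glen_def by auto
qed

lemma gallery_lifts_gch_subset:
  assumes "root_system \<Phi>" "root_subsystem \<Phi> \<Psi>" "gallery_lifts \<Phi> \<Psi> \<Delta> \<Gamma>'" "j \<le> glen \<Delta>"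
  shows "gch \<Delta> j \<subseteq> gch \<Gamma>' j"
  using lifts_subset[OF assms(1,2)] assms(3,4) unfolding gallery_lifts_def by blast

lemma sorted_idx_list: "sorted_wrt (<) (idx_list \<Psi> \<Gamma>)"
  unfolding idx_list_def by (intro sorted_wrt_filter sorted_wrt_upt)

lemma set_idx_list: "set (idx_list \<Psi> \<Gamma>) = I_idx \<Psi> \<Gamma>"
  unfolding idx_list_def I_idx_def by auto

lemma glen_restrict_gal: "glen (restrict_gal \<Psi> \<Gamma>) = length (idx_list \<Psi> \<Gamma>)"
  unfolding glen_def restrict_gal_def by simp

lemma gch_restrict_gal:
  "j \<le> length (idx_list \<Psi> \<Gamma>) \<Longrightarrow>
    gch (restrict_gal \<Psi> \<Gamma>) j = subch \<Psi> (gch \<Gamma> ((0 # idx_list \<Psi> \<Gamma>) ! j))"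
  unfolding gch_def restrict_gal_def by (cases j) auto

lemma groot_restrict_gal:
  "i \<in> {1..length (idx_list \<Psi> \<Gamma>)} \<Longrightarrow> groot (restrict_gal \<Psi> \<Gamma>) i = groot \<Gamma> (idx_list \<Psi> \<Gamma> ! (i - 1))"
  unfolding groot_def restrict_gal_def by auto

lemma idx_list_gap:
  assumes i: "i < length (idx_list \<Psi> \<Gamma>)"
    and j: "(0 # idx_list \<Psi> \<Gamma>) ! i < j" "j < idx_list \<Psi> \<Gamma> ! i"
  shows "groot \<Gamma> j \<notin> \<Psi>"
proof
  assume "groot \<Gamma> j \<in> \<Psi>"
  let ?L = "idx_list \<Psi> \<Gamma>"
  have sorted: "sorted ?L" using sorted_idx_list strict_sorted_imp_sorted by blast
  have "?L ! i \<le> glen \<Gamma>"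
    using nth_mem[OF i] set_idx_list[of \<Psi> \<Gamma>] unfolding I_idx_def by auto
  with j \<open>groot \<Gamma> j \<in> \<Psi>\<close> have "j \<in> I_idx \<Psi> \<Gamma>" unfolding I_idx_def by auto
  then obtain q where q: "q < length ?L" "?L ! q = j"
    unfolding set_idx_list[symmetric] by (metis in_set_conv_nth)
  have "q < i"
  proof (rule ccontr)
    assume "\<not> q < i"
    then have "?L ! i \<le> ?L ! q" using sorted_nth_mono[OF sorted] q(1) by simp
    then show False using q(2) j(2) by simp
  qed
  then obtain i' where "i = Suc i'" by (cases i) auto
  then have "?L ! q \<le> ?L ! i'" using sorted_nth_mono[OF sorted] \<open>q < i\<close> i by simp
  then show False using q(2) j(1) \<open>i = Suc i'\<close> by simp
qed

lemma gch_restrict_gal_before_idx: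
  assumes R: "root_system \<Phi>" and sub: "root_subsystem \<Phi> \<Psi>" and \<Gamma>: "gallery \<Phi> \<Gamma>"
    and i: "i \<in> {1..length (idx_list \<Psi> \<Gamma>)}"
  shows "gch (restrict_gal \<Psi> \<Gamma>) (i - 1) = subch \<Psi> (gch \<Gamma> (idx_list \<Psi> \<Gamma> ! (i - 1) - 1))"
proof -
  let ?L = "idx_list \<Psi> \<Gamma>"
  define k where "k = ?L ! (i - 1)"
  have "k \<in> set ?L" using i unfolding k_def by (intro nth_mem) auto
  then have k: "1 \<le> k" "k \<le> glen \<Gamma>" unfolding set_idx_list I_idx_def by auto
  have "(0 # ?L) ! (i - 1) < k"
  proof (cases "i = 1")
    case False
    then have "i - 1 - 1 < i - 1" "i - 1 < length ?L" using i by auto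
    then have "?L ! (i - 1 - 1) < k" unfolding k_def by (rule sorted_wrt_nth_less[OF sorted_idx_list])
    moreover have "(0 # ?L) ! (i - 1) = ?L ! (i - 1 - 1)" using False i by (simp add: nth_Cons_pos)
    ultimately show ?thesis by simp
  qed (use k in simp)
  moreover have "\<forall>j. (0 # ?L) ! (i - 1) < j \<and> j \<le> k - 1 \<longrightarrow> groot \<Gamma> j \<notin> \<Psi>"
  proof (intro allI impI)
    fix j assume j: "(0 # ?L) ! (i - 1) < j \<and> j \<le> k - 1"
    have "i - 1 < length ?L" using i by auto
    moreover have "j < ?L ! (i - 1)" using j k(1) unfolding k_def by linarith
    ultimately show "groot \<Gamma> j \<notin> \<Psi>" using j idx_list_gap by blast
  qed
  ultimately have "subch \<Psi> (gch \<Gamma> ((0 # ?L) ! (i - 1))) = subch \<Psi> (gch \<Gamma> (k - 1))"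
    using k(2) by (intro gallery_subch_eq[OF R sub \<Gamma>]) auto
  moreover have "i - 1 \<le> length ?L" using i by auto
  ultimately show ?thesis using gch_restrict_gal[of "i - 1" \<Psi> \<Gamma>] unfolding k_def by simp
qed

lemma lift_of_restrict_gal_at_idx:
  assumes R: "root_system \<Phi>" and sub: "root_subsystem \<Phi> \<Psi>" and \<Gamma>: "gallery \<Phi> \<Gamma>"
    and lift: "gallery_lifts \<Phi> \<Psi> \<Delta> (restrict_gal \<Psi> \<Gamma>)" and i: "i \<in> {1..glen \<Delta>}"
  defines "k \<equiv> idx_list \<Psi> \<Gamma> ! (i - 1)"
  shows "k \<in> I_idx \<Psi> \<Gamma>" and "hyp (groot \<Delta> i) = hyp (groot \<Gamma> k)"
    and "same_side (groot \<Delta> i) (gch \<Delta> i) (gch \<Gamma> k)"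
    and "same_side (groot \<Delta> i) (gch \<Delta> (i - 1)) (gch \<Gamma> (k - 1))"
proof -
  have i': "i \<in> {1..length (idx_list \<Psi> \<Gamma>)}"
    using i gallery_lifts_glen[OF lift] glen_restrict_gal by metis
  then have "k \<in> set (idx_list \<Psi> \<Gamma>)" unfolding k_def by (intro nth_mem) auto
  then show k: "k \<in> I_idx \<Psi> \<Gamma>" by (simp only: set_idx_list)
  show hyp: "hyp (groot \<Delta> i) = hyp (groot \<Gamma> k)"
    using gallery_lifts_hyp[OF lift i] groot_restrict_gal[OF i'] unfolding k_def by simp
  have "\<Psi> \<subseteq> \<Phi>" using root_subsystem_subset[OF sub] .
  moreover have "gch \<Gamma> k \<in> chambers \<Phi>" "gch \<Gamma> (k - 1) \<in> chambers \<Phi>"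
    using \<Gamma> k unfolding gallery_def I_idx_def by auto
  moreover have "groot \<Gamma> k \<in> \<Psi>" using k unfolding I_idx_def by auto
  moreover have "gch \<Delta> i \<subseteq> subch \<Psi> (gch \<Gamma> k)"
    using gallery_lifts_gch_subset[OF R sub lift, of i] i gch_restrict_gal[of i \<Psi> \<Gamma>] i'
    unfolding k_def by auto
  moreover have "gch \<Delta> (i - 1) \<subseteq> subch \<Psi> (gch \<Gamma> (k - 1))"
  proof -
    have "i - 1 \<le> glen \<Delta>" using i by auto
    then show ?thesis
      using gallery_lifts_gch_subset[OF R sub lift] gch_restrict_gal_before_idx[OF R sub \<Gamma> i']
      unfolding k_def by metis
  qed
  ultimately show "same_side (groot \<Delta> i) (gch \<Delta> i) (gch \<Gamma> k)"
    "same_side (groot \<Delta> i) (gch \<Delta> (i - 1)) (gch \<Gamma> (k - 1))"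
    using same_side_subch hyp by metis+
qed

theorem theorem3:
  fixes \<Phi> \<Psi> :: "'a::euclidean_space set"
    and \<Gamma> \<Delta> :: "'a gallery" and p :: "nat \<Rightarrow> nat"
  assumes "root_system \<Phi>"
    and "root_subsystem \<Phi> \<Psi>" and "saturated \<Phi> \<Psi>"
    and "gallery \<Phi> \<Gamma>"
    and "gallery \<Phi> \<Delta>"
    and "gallery_lifts \<Phi> \<Psi> \<Delta> (restrict_gal \<Psi> \<Gamma>)"
    and "strict_mono_on {1..glen (restrict_gal \<Psi> \<Gamma>)} p"
    and "p ` {1..glen (restrict_gal \<Psi> \<Gamma>)} = I_idx \<Psi> \<Gamma>"
  shows "p_pair \<Delta> \<Gamma> p \<and>
         (\<forall>i\<in>{1..glen \<Delta>}. pair_sign \<Delta> \<Gamma> p i = 1) \<and>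
         (\<forall>i\<in>{1..glen \<Delta>}. pair_cosign \<Delta> \<Gamma> p i = 1)"
proof -
  note at_idx = lift_of_restrict_gal_at_idx[OF assms(1,2,4,6)]
  have len: "glen (restrict_gal \<Psi> \<Gamma>) = glen \<Delta>"
    using gallery_lifts_glen[OF assms(6)] by simp
  have p: "p i = idx_list \<Psi> \<Gamma> ! (i - 1)" if "i \<in> {1..glen \<Delta>}" for i
    using strict_mono_on_onto_sorted_list[OF sorted_idx_list] assms(7,8) that len
    unfolding glen_restrict_gal set_idx_list by metis
  have "p ` {1..glen \<Delta>} \<subseteq> {1..glen \<Gamma>}"
    using assms(8) len unfolding I_idx_def by auto
  then show ?thesis
    using assms(7) len at_idx p
    unfolding p_pair_def pair_sign_def pair_cosign_def by auto
qed

end
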